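(* For prefixes $p,p',p''$, whenever both sides are defined (via the concatenation relation, which is a partial function), $p \cdot (p' \cdot p'') = (p \cdot p') \cdot p''$.
   Context: Prefixes are generated by $p ::= \mathtt{oneEmp} \mid \mathtt{oneFull} \mid \mathtt{epsEmp} \mid \mathtt{par}(p,p') \mid \mathtt{catA}(p) \mid \mathtt{catB}(p,p') \mid \mathtt{sumEmp} \mid \mathtt{inl}(p) \mid \mathtt{inr}(p) \mid \mathtt{starEmp} \mid \mathtt{starDone} \mid \mathtt{stA}(p) \mid \mathtt{stB}(p,p')$. The prefixes of type $1$ are exactly $\mathtt{oneEmp}$ and $\mathtt{oneFull}$. Prefix concatenation $p\cdot p'\sim p''$ (inductive): $\mathtt{epsEmp}\cdot\mathtt{epsEmp}\sim\mathtt{epsEmp}$; $\mathtt{oneEmp}\cdot p\sim p$ whenever $p$ is a prefix of type $1$; $\mathtt{oneFull}\cdot\mathtt{epsEmp}\sim\mathtt{oneFull}$; $\mathtt{par}(p_1,p_2)\cdot\mathtt{par}(p_1',p_2')\sim\mathtt{par}(p_1'',p_2'')$ if $p_i\cdot p_i'\sim p_i''$ for $i=1,2$; $\mathtt{catA}(p)\cdot\mathtt{catA}(p')\sim\mathtt{catA}(p'')$ if $p\cdot p'\sim p''$; $\mathtt{catA}(p)\cdot\mathtt{catB}(p',q)\sim\mathtt{catB}(p'',q)$ if $p\cdot p'\sim p''$; $\mathtt{catB}(p,p')\cdot p''\sim\mathtt{catB}(p,p''')$ if $p'\cdot p''\sim p'''$; $\mathtt{sumEmp}\cdot p\sim p$;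 $\mathtt{inl}(p)\cdot p'\sim\mathtt{inl}(p'')$ if $p\cdot p'\sim p''$; $\mathtt{inr}(p)\cdot p'\sim\mathtt{inr}(p'')$ if $p\cdot p'\sim p''$; $\mathtt{starEmp}\cdot p\sim p$; $\mathtt{starDone}\cdot\mathtt{epsEmp}\sim\mathtt{starDone}$; $\mathtt{stA}(p)\cdot\mathtt{catA}(p')\sim\mathtt{stA}(p'')$ if $p\cdot p'\sim p''$; $\mathtt{stA}(p)\cdot\mathtt{catB}(p',q)\sim\mathtt{stB}(p'',q)$ if $p\cdot p'\sim p''$; $\mathtt{stB}(p,p')\cdot p''\sim\mathtt{stB}(p,p''')$ if $p'\cdot p''\sim p'''$. We write $p\cdot p'$ for the unique $p''$ with $p\cdot p'\sim p''$ when it exists. *)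

theory Defs
  imports Main
begin

datatype prefix =
    oneEmp | oneFull | epsEmp
  | par prefix prefix
  | catA prefix | catB prefix prefix
  | sumEmp | inl prefix | inr prefix
  | starEmp | starDone | stA prefix | stB prefix prefix

definition is_one_prefix :: "prefix \<Rightarrow> bool" where
  "is_one_prefix p \<longleftrightarrow> p = oneEmp \<or> p = oneFull"

text \<open>Prefix concatenation relation: pconcat p p' p'' means p . p' ~ p''.\<close>
inductive pconcat :: "prefix \<Rightarrow> prefix \<Rightarrow> prefix \<Rightarrow> bool" where
  epsEmp: "pconcat epsEmp epsEmp epsEmp"
| oneEmp: "is_one_prefix p \<Longrightarrow> pconcat oneEmp p p"
| oneFull: "pconcat oneFull epsEmp oneFull"
| par: "pconcat p1 p1' p1'' \<Longrightarrow> pconcat p2 p2' p2'' \<Longrightarrow> pconcat (par p1 p2) (par p1' p2') (par p1'' p2'')"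
| catAA: "pconcat p p' p'' \<Longrightarrow> pconcat (catA p) (catA p') (catA p'')"
| catAB: "pconcat p p' p'' \<Longrightarrow> pconcat (catA p) (catB p' q) (catB p'' q)"
| catB: "pconcat p' p'' p''' \<Longrightarrow> pconcat (catB p p') p'' (catB p p''')"
| sumEmp: "pconcat sumEmp p p"
| inl: "pconcat p p' p'' \<Longrightarrow> pconcat (inl p) p' (inl p'')"
| inr: "pconcat p p' p'' \<Longrightarrow> pconcat (inr p) p' (inr p'')"
| starEmp: "pconcat starEmp p p"
| starDone: "pconcat starDone epsEmp starDone"
| stAA: "pconcat p p' p'' \<Longrightarrow> pconcat (stA p) (catA p') (stA p'')"
| stAB: "pconcat p p' p'' \<Longrightarrow> pconcat (stA p) (catB p' q) (stB p'' q)"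
| stB: "pconcat p' p'' p''' \<Longrightarrow> pconcat (stB p p') p'' (stB p p''')"

end

theory Submission
  imports Defs
begin

text \<open>Concatenation is defined by recursion on its left argument, so associativity follows by
  induction on the derivation of \<open>p \<cdot> p' \<sim> b\<close>: in each case the derivations of \<open>b \<cdot> p'' \<sim> r\<close>
  and \<open>p' \<cdot> p'' \<sim> a\<close> are inverted by their head constructors and reassembled using the induction
  hypothesis. The units \<open>oneEmp\<close>, \<open>sumEmp\<close>, \<open>starEmp\<close> pass their right argument through, and there
  one needs that concatenation is a partial function.\<close>

inductive_cases pconcat_leftE:
  "pconcat epsEmp q r" "pconcat oneEmp q r" "pconcat oneFull q r" "pconcat (par x y) q r"
  "pconcat (catA x) q r" "pconcat (catB x y) q r" "pconcat sumEmp q r" "pconcat (inl x) q r"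
  "pconcat (inr x) q r" "pconcat starEmp q r" "pconcat starDone q r" "pconcat (stA x) q r"
  "pconcat (stB x y) q r"

lemma pconcat_functional: "pconcat p q r \<Longrightarrow> pconcat p q r' \<Longrightarrow> r = r'"
  by (induction arbitrary: r' rule: pconcat.induct) (blast elim: pconcat_leftE)+

lemma pconcat_is_one_prefix: "is_one_prefix p \<Longrightarrow> pconcat p q r \<Longrightarrow> is_one_prefix r"
  by (auto simp: is_one_prefix_def elim: pconcat_leftE)

lemma pconcat_assoc:
  "pconcat p p' b \<Longrightarrow> pconcat b p'' r \<Longrightarrow> pconcat p' p'' a \<Longrightarrow> pconcat p a r"
proof (induction arbitrary: p'' r a rule: pconcat.induct)
  case (oneEmp q)
  then show ?case by (metis pconcat.oneEmp pconcat_functional pconcat_is_one_prefix)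
next
  case (sumEmp q)
  then show ?case by (metis pconcat.sumEmp pconcat_functional)
next
  case (starEmp q)
  then show ?case by (metis pconcat.starEmp pconcat_functional)
qed (auto elim!: pconcat_leftE intro: pconcat.intros dest: pconcat_functional)

theorem mainTheorem9:
  fixes p p' p'' a b l r :: prefix
  assumes "pconcat p' p'' a" and "pconcat p a l"
      and "pconcat p p' b" and "pconcat b p'' r"
  shows "l = r"
proof -
  have "pconcat p a r" using pconcat_assoc assms(3,4,1) .
  with assms(2) show "l = r" by (rule pconcat_functional)
qed

end
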